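(* Let $A,B,D$ be lattices with finite generating sets $X_0,Y_0,P$ respectively, let $D$ satisfy Dean's condition (D) for $P$, and let $g\colon A\to D$, $h\colon B\to D$ be bounded epimorphisms. Let $E:=g(X_0)\cup h(Y_0)\cup P$ and $$Z:=\{(x,\alpha_h g(x)) : x\in X_0\}\cup\{(\beta_g h(y),y): y\in Y_0\}\cup\{(\alpha_g(d),\beta_h(d)) : d\in E\}\cup\{(\beta_g(d),\alpha_h(d)): d\in E\}\subseteq A\times B.$$ Let $X$ be the set of first components and $Y$ the set of second components of elements of $Z$ (these are finite generating sets of $A$ and $B$), and let $\langle Z\rangle$ be the sublattice of $A\times B$ generated by $Z$. Then for every $k\in\mathbb N$: (1) for all $b\in G_{Y,k}$ we have $(\alpha_{g,k}(h(b)),\,b)\in\langle Z\rangle$; (2) for all $a\in H_{X,k}$ we have $(a,\,\beta_{h,k}(g(a)))\in\langle Z\rangle$. Here $G,H,\alpha_{g,k},\beta_{h,k}$ are computed with respect to the generating set $X$ of $A$ (for $g$) and $Y$ of $B$ (for $h$).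
   Context: A lattice homomorphism $g\colon A\to D$ is lower bounded if for every $d\in D$ the set $\{x\in A : g(x)\ge d\}$ is empty or has a least element; upper bounded if for every $d$ the set $\{x: g(x)\le d\}$ is empty or has a greatest element; bounded if both. For a bounded epimorphism $g$, $\beta_g(d):=\bigwedge g^{-1}(d)$ is the least and $\alpha_g(d):=\bigvee g^{-1}(d)$ the greatest preimage of $d$. Dean's condition (D) for a lattice $D$ with finite generating set $P$: for all finite $S,T\subseteq D$ with $\bigwedge S\le\bigvee T$, either some $s\in S$ has $s\le\bigvee T$, or some $t\in T$ has $\bigwedge S\le t$, or some $p\in P$ has $\bigwedge S\le p\le\bigvee T$. For a lattice $A$ with finite generating set $X$ and $W\subseteq A$, let $W^\wedge:=\{\bigwedge U: U\subseteq W\text{ finite}\}$ and $W^\vee:=\{\bigvee U: U\subseteq W \text{ finite}\}$, with the conventions $\bigwedge\emptyset:=\bigvee X$ and $\bigvee\emptyset:=\bigwedge X$. Define $G_{X,0}:=X$, $H_{X,k}:=G_{X,k}^\wedge$, $G_{X,k+1}:=H_{X,k}^\vee$ for $k\in\mathbb N$. For an epimorphism $g\colon A\to D$, $k\in\mathbb N$, $d\in D$: $\alpha_{g,k}(d):=\bigvee\{w\in G_{X,k}: g(w)\le d\}$ and $\beta_{g,k}(d):=\bigwedge\{w\in H_{X,k}: g(w)\ge d\}$. *)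

theory Defs
  imports Main "HOL-Library.Product_Order"
begin

inductive_set sublat_gen :: "'a::lattice set \<Rightarrow> 'a set" for W :: "'a set" where
  gen_base: "x \<in> W \<Longrightarrow> x \<in> sublat_gen W"
| gen_inf: "x \<in> sublat_gen W \<Longrightarrow> y \<in> sublat_gen W \<Longrightarrow> inf x y \<in> sublat_gen W"
| gen_sup: "x \<in> sublat_gen W \<Longrightarrow> y \<in> sublat_gen W \<Longrightarrow> sup x y \<in> sublat_gen W"

definition fin_gen_set :: "'a::lattice set \<Rightarrow> bool" where
  "fin_gen_set X \<longleftrightarrow> finite X \<and> sublat_gen X = UNIV"

definition lattice_hom :: "('a::lattice \<Rightarrow> 'b::lattice) \<Rightarrow> bool" where
  "lattice_hom g \<longleftrightarrow> (\<forall>x y. g (inf x y) = inf (g x) (g y) \<and> g (sup x y) = sup (g x) (g y))"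

definition lattice_epi :: "('a::lattice \<Rightarrow> 'b::lattice) \<Rightarrow> bool" where
  "lattice_epi g \<longleftrightarrow> lattice_hom g \<and> surj g"

definition lower_bounded :: "('a::lattice \<Rightarrow> 'b::lattice) \<Rightarrow> bool" where
  "lower_bounded g \<longleftrightarrow> (\<forall>d. {x. d \<le> g x} = {} \<or>
      (\<exists>m. d \<le> g m \<and> (\<forall>x. d \<le> g x \<longrightarrow> m \<le> x)))"

definition upper_bounded :: "('a::lattice \<Rightarrow> 'b::lattice) \<Rightarrow> bool" where
  "upper_bounded g \<longleftrightarrow> (\<forall>d. {x. g x \<le> d} = {} \<or>
      (\<exists>m. g m \<le> d \<and> (\<forall>x. g x \<le> d \<longrightarrow> x \<le> m)))"

definition bounded_hom :: "('a::lattice \<Rightarrow> 'b::lattice) \<Rightarrow> bool" where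
  "bounded_hom g \<longleftrightarrow> lattice_hom g \<and> lower_bounded g \<and> upper_bounded g"

definition beta_map :: "('a::lattice \<Rightarrow> 'b::lattice) \<Rightarrow> 'b \<Rightarrow> 'a" where
  "beta_map g d = (LEAST x. g x = d)"

definition alpha_map :: "('a::lattice \<Rightarrow> 'b::lattice) \<Rightarrow> 'b \<Rightarrow> 'a" where
  "alpha_map g d = (GREATEST x. g x = d)"

definition dean_condition :: "'d::lattice set \<Rightarrow> bool" where
  "dean_condition P \<longleftrightarrow> (\<forall>S T. finite S \<and> S \<noteq> {} \<and> finite T \<and> T \<noteq> {} \<and>
      Inf_fin S \<le> Sup_fin T \<longrightarrow>
      (\<exists>s\<in>S. s \<le> Sup_fin T) \<or> (\<exists>t\<in>T. Inf_fin S \<le> t) \<or>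
      (\<exists>p\<in>P. Inf_fin S \<le> p \<and> p \<le> Sup_fin T))"

definition bigmeet :: "'a::lattice set \<Rightarrow> 'a set \<Rightarrow> 'a" where
  "bigmeet X U = (if U = {} then Sup_fin X else Inf_fin U)"

definition bigjoin :: "'a::lattice set \<Rightarrow> 'a set \<Rightarrow> 'a" where
  "bigjoin X U = (if U = {} then Inf_fin X else Sup_fin U)"

definition meet_cl :: "'a::lattice set \<Rightarrow> 'a set \<Rightarrow> 'a set" where
  "meet_cl X W = {bigmeet X U | U. finite U \<and> U \<subseteq> W}"

definition join_cl :: "'a::lattice set \<Rightarrow> 'a set \<Rightarrow> 'a set" where
  "join_cl X W = {bigjoin X U | U. finite U \<and> U \<subseteq> W}"

primrec G_set :: "'a::lattice set \<Rightarrow> nat \<Rightarrow> 'a set" where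
  "G_set X 0 = X"
| "G_set X (Suc k) = join_cl X (meet_cl X (G_set X k))"

definition H_set :: "'a::lattice set \<Rightarrow> nat \<Rightarrow> 'a set" where
  "H_set X k = meet_cl X (G_set X k)"

definition alpha_k :: "'a::lattice set \<Rightarrow> ('a \<Rightarrow> 'd::lattice) \<Rightarrow> nat \<Rightarrow> 'd \<Rightarrow> 'a" where
  "alpha_k X g k d = bigjoin X {w \<in> G_set X k. g w \<le> d}"

definition beta_k :: "'a::lattice set \<Rightarrow> ('a \<Rightarrow> 'd::lattice) \<Rightarrow> nat \<Rightarrow> 'd \<Rightarrow> 'a" where
  "beta_k X g k d = bigmeet X {w \<in> H_set X k. d \<le> g w}"

end

theory Submission
  imports Defs
begin

text \<open>All pairs of the sublattice generated by \<open>Z\<close> lie in the pullback \<open>{(a, b). g a = h b}\<close>.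
  The core is an invariant of \<open>b \<in> G\<^sub>Y\<^sub>,\<^sub>m\<close>: every \<open>w \<in> H\<^sub>X\<^sub>,\<^sub>j\<close> with \<open>g w \<le> h b\<close> lies below
  the first component \<open>x \<in> H\<^sub>X\<^sub>,\<^sub>j\<close> of a pair \<open>(x, y)\<close> of the sublattice with \<open>y \<le> b\<close>. It is proved
  by induction on \<open>m\<close> and \<open>j\<close>: writing \<open>w\<close> as a meet and \<open>b\<close> as a join, Dean's condition
  reduces \<open>g w \<le> h b\<close> either to a single meetand or joinand, handled by induction, or to a
  generator \<open>p \<in> P\<close> with \<open>g w \<le> p \<le> h b\<close>, for which \<open>(\<alpha>\<^sub>g p, \<beta>\<^sub>h p) \<in> Z\<close> is such a pair.
  Joining these pairs over the set defining \<open>\<alpha>\<^sub>g\<^sub>,\<^sub>k(h b)\<close> (meeting them over the set defining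
  \<open>\<beta>\<^sub>h\<^sub>,\<^sub>k(g a)\<close>) and absorbing a partner of \<open>b\<close> (of \<open>a\<close>) from the same level yields the
  required pair.\<close>

section \<open>Homomorphisms and preimage bounds\<close>

lemma lattice_hom_mono: "lattice_hom g \<Longrightarrow> x \<le> y \<Longrightarrow> g x \<le> g y"
  unfolding lattice_hom_def by (metis le_iff_sup)

lemma lattice_hom_Inf_fin:
  assumes "lattice_hom g" "finite U" "U \<noteq> {}"
  shows "g (Inf_fin U) = Inf_fin (g ` U)"
  using assms(2,3) by (induction U rule: finite_ne_induct) (use assms(1) in \<open>auto simp: lattice_hom_def\<close>)

lemma lattice_hom_Sup_fin:
  assumes "lattice_hom g" "finite U" "U \<noteq> {}"
  shows "g (Sup_fin U) = Sup_fin (g ` U)"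
  using assms(2,3) by (induction U rule: finite_ne_induct) (use assms(1) in \<open>auto simp: lattice_hom_def\<close>)

lemma lattice_hom_fst: "lattice_hom fst"
  and lattice_hom_snd: "lattice_hom snd"
  by (simp_all add: lattice_hom_def)

lemma beta_map_least_preimage:
  assumes "lattice_epi g" "bounded_hom g"
  shows "g (beta_map g d) = d \<and> (\<forall>x. d \<le> g x \<longrightarrow> beta_map g d \<le> x)"
proof -
  obtain x0 where x0: "g x0 = d" using assms(1) unfolding lattice_epi_def by (metis surjD)
  then obtain m where m: "d \<le> g m" "\<forall>x. d \<le> g x \<longrightarrow> m \<le> x"
    using assms(2) unfolding bounded_hom_def lower_bounded_def by blast
  have "g m \<le> d"
    using m x0 lattice_hom_mono assms(1) unfolding lattice_epi_def by (metis order_refl)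
  with m have gm: "g m = d" by (simp add: order_antisym)
  have "beta_map g d = m" unfolding beta_map_def
    by (rule Least_equality) (use gm m in auto)
  with gm m show ?thesis by auto
qed

lemma alpha_map_greatest_preimage:
  assumes "lattice_epi g" "bounded_hom g"
  shows "g (alpha_map g d) = d \<and> (\<forall>x. g x \<le> d \<longrightarrow> x \<le> alpha_map g d)"
proof -
  obtain x0 where x0: "g x0 = d" using assms(1) unfolding lattice_epi_def by (metis surjD)
  then obtain m where m: "g m \<le> d" "\<forall>x. g x \<le> d \<longrightarrow> x \<le> m"
    using assms(2) unfolding bounded_hom_def upper_bounded_def by blast
  have "d \<le> g m"
    using m x0 lattice_hom_mono assms(1) unfolding lattice_epi_def by (metis order_refl)
  with m have gm: "g m = d" by (simp add: order_antisym)
  have "alpha_map g d = m" unfolding alpha_map_def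
    by (rule Greatest_equality) (use gm m in auto)
  with gm m show ?thesis by auto
qed

lemma dean_conditionE:
  assumes "dean_condition P" "lattice_hom g" "lattice_hom h"
    and "finite U" "U \<noteq> {}" "finite V" "V \<noteq> {}"
    and "g (Inf_fin U) \<le> h (Sup_fin V)"
  obtains u where "u \<in> U" "g u \<le> h (Sup_fin V)"
  | v where "v \<in> V" "g (Inf_fin U) \<le> h v"
  | p where "p \<in> P" "g (Inf_fin U) \<le> p" "p \<le> h (Sup_fin V)"
proof -
  have gU: "g (Inf_fin U) = Inf_fin (g ` U)" and hV: "h (Sup_fin V) = Sup_fin (h ` V)"
    using assms lattice_hom_Inf_fin lattice_hom_Sup_fin by blast+
  have "(\<exists>s\<in>g ` U. s \<le> Sup_fin (h ` V)) \<or> (\<exists>t\<in>h ` V. Inf_fin (g ` U) \<le> t)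
        \<or> (\<exists>p\<in>P. Inf_fin (g ` U) \<le> p \<and> p \<le> Sup_fin (h ` V))"
    using assms(1) unfolding dean_condition_def
    by (rule allE[of _ "g ` U"], elim allE[of _ "h ` V"]) (use assms(4-8) gU hV in simp)
  with that gU hV show thesis by auto
qed

section \<open>Closure under finite meets and joins\<close>

definition inf_closed :: "'a::lattice set \<Rightarrow> bool" where
  "inf_closed C \<longleftrightarrow> (\<forall>x\<in>C. \<forall>y\<in>C. inf x y \<in> C)"

definition sup_closed :: "'a::lattice set \<Rightarrow> bool" where
  "sup_closed C \<longleftrightarrow> (\<forall>x\<in>C. \<forall>y\<in>C. sup x y \<in> C)"

lemma Inf_fin_mem_inf_closed:
  assumes "inf_closed C" "finite U" "U \<noteq> {}" "U \<subseteq> C"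
  shows "Inf_fin U \<in> C"
  using assms(2-4) by (induction U rule: finite_ne_induct) (use assms(1) in \<open>auto simp: inf_closed_def\<close>)

lemma Sup_fin_mem_sup_closed:
  assumes "sup_closed C" "finite U" "U \<noteq> {}" "U \<subseteq> C"
  shows "Sup_fin U \<in> C"
  using assms(2-4) by (induction U rule: finite_ne_induct) (use assms(1) in \<open>auto simp: sup_closed_def\<close>)

lemma bigmeet_mem_inf_closed:
  "inf_closed C \<Longrightarrow> Sup_fin X \<in> C \<Longrightarrow> finite U \<Longrightarrow> U \<subseteq> C \<Longrightarrow> bigmeet X U \<in> C"
  unfolding bigmeet_def by (simp add: Inf_fin_mem_inf_closed)

lemma bigjoin_mem_sup_closed:
  "sup_closed C \<Longrightarrow> Inf_fin X \<in> C \<Longrightarrow> finite U \<Longrightarrow> U \<subseteq> C \<Longrightarrow> bigjoin X U \<in> C"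
  unfolding bigjoin_def by (simp add: Sup_fin_mem_sup_closed)

lemma bigmeet_lower: "finite U \<Longrightarrow> u \<in> U \<Longrightarrow> bigmeet X U \<le> u"
  by (auto simp: bigmeet_def Inf_fin.coboundedI)

lemma bigjoin_upper: "finite U \<Longrightarrow> u \<in> U \<Longrightarrow> u \<le> bigjoin X U"
  by (auto simp: bigjoin_def Sup_fin.coboundedI)

lemma meet_cl_subset: "inf_closed C \<Longrightarrow> Sup_fin X \<in> C \<Longrightarrow> W \<subseteq> C \<Longrightarrow> meet_cl X W \<subseteq> C"
  unfolding meet_cl_def using bigmeet_mem_inf_closed[of C X] by blast

lemma join_cl_subset: "sup_closed C \<Longrightarrow> Inf_fin X \<in> C \<Longrightarrow> W \<subseteq> C \<Longrightarrow> join_cl X W \<subseteq> C"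
  unfolding join_cl_def using bigjoin_mem_sup_closed[of C X] by blast

lemma sublat_gen_subset:
  assumes "inf_closed C" "sup_closed C" "W \<subseteq> C"
  shows "sublat_gen W \<subseteq> C"
proof
  fix x assume "x \<in> sublat_gen W"
  then show "x \<in> C"
    by induction (use assms in \<open>auto simp: inf_closed_def sup_closed_def\<close>)
qed

lemma inf_closed_sublat_gen: "inf_closed (sublat_gen W)"
  and sup_closed_sublat_gen: "sup_closed (sublat_gen W)"
  by (auto simp: inf_closed_def sup_closed_def intro: sublat_gen.intros)

lemma sublat_gen_Pair_inf:
  "(a, b) \<in> sublat_gen W \<Longrightarrow> (c, d) \<in> sublat_gen W \<Longrightarrow> (inf a c, inf b d) \<in> sublat_gen W"
  using sublat_gen.gen_inf[of "(a, b)" W "(c, d)"] by simp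

lemma sublat_gen_Pair_sup:
  "(a, b) \<in> sublat_gen W \<Longrightarrow> (c, d) \<in> sublat_gen W \<Longrightarrow> (sup a c, sup b d) \<in> sublat_gen W"
  using sublat_gen.gen_sup[of "(a, b)" W "(c, d)"] by simp

lemma fin_gen_set_nonempty: "fin_gen_set X \<Longrightarrow> X \<noteq> {}"
  using sublat_gen_subset[of "{}" "{}"]
  by (auto simp: fin_gen_set_def inf_closed_def sup_closed_def)

lemma fin_gen_set_bounds:
  assumes "fin_gen_set X0" "X0 \<subseteq> X" "finite X"
  shows "a \<le> Sup_fin X" "Inf_fin X \<le> a"
proof -
  have "sublat_gen X0 \<subseteq> {a. a \<le> Sup_fin X \<and> Inf_fin X \<le> a}"
    using assms(2,3)
    by (intro sublat_gen_subset)
       (auto simp: inf_closed_def sup_closed_def intro: Sup_fin.coboundedI Inf_fin.coboundedI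
         le_infI1 le_supI1)
  with assms(1) show "a \<le> Sup_fin X" "Inf_fin X \<le> a" by (auto simp: fin_gen_set_def)
qed

section \<open>The levels \<open>G\<^sub>k\<close> and \<open>H\<^sub>k\<close>\<close>

lemma finite_meet_cl: "finite W \<Longrightarrow> finite (meet_cl X W)"
  by (rule finite_subset[of _ "bigmeet X ` Pow W"]) (auto simp: meet_cl_def)

lemma finite_join_cl: "finite W \<Longrightarrow> finite (join_cl X W)"
  by (rule finite_subset[of _ "bigjoin X ` Pow W"]) (auto simp: join_cl_def)

lemma subset_meet_cl: "W \<subseteq> meet_cl X W"
  unfolding meet_cl_def by (force intro: exI[of _ "{x}" for x] simp: bigmeet_def)

lemma subset_join_cl: "W \<subseteq> join_cl X W"
  unfolding join_cl_def by (force intro: exI[of _ "{x}" for x] simp: bigjoin_def)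

lemma Sup_fin_mem_meet_cl: "Sup_fin X \<in> meet_cl X W"
  unfolding meet_cl_def bigmeet_def by (auto intro: exI[of _ "{}"])

lemma Inf_fin_mem_join_cl: "Inf_fin X \<in> join_cl X W"
  unfolding join_cl_def bigjoin_def by (auto intro: exI[of _ "{}"])

lemma inf_closed_meet_cl:
  assumes top: "\<And>a. a \<le> Sup_fin X"
  shows "inf_closed (meet_cl X W)"
  unfolding inf_closed_def
proof (intro ballI)
  fix x y assume "x \<in> meet_cl X W" "y \<in> meet_cl X W"
  then obtain U1 U2 where U: "finite U1" "U1 \<subseteq> W" "x = bigmeet X U1"
    "finite U2" "U2 \<subseteq> W" "y = bigmeet X U2"
    unfolding meet_cl_def by auto
  show "inf x y \<in> meet_cl X W"
  proof (cases "U1 = {} \<or> U2 = {}")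
    case True
    then have "inf x y = x \<or> inf x y = y"
      using U top by (auto simp: bigmeet_def inf_absorb1 inf_absorb2)
    with \<open>x \<in> meet_cl X W\<close> \<open>y \<in> meet_cl X W\<close> show ?thesis by auto
  next
    case False
    then have "inf x y = bigmeet X (U1 \<union> U2)" using U by (simp add: bigmeet_def Inf_fin.union)
    with U show ?thesis unfolding meet_cl_def by blast
  qed
qed

lemma sup_closed_join_cl:
  assumes bot: "\<And>a. Inf_fin X \<le> a"
  shows "sup_closed (join_cl X W)"
  unfolding sup_closed_def
proof (intro ballI)
  fix x y assume "x \<in> join_cl X W" "y \<in> join_cl X W"
  then obtain U1 U2 where U: "finite U1" "U1 \<subseteq> W" "x = bigjoin X U1"
    "finite U2" "U2 \<subseteq> W" "y = bigjoin X U2"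
    unfolding join_cl_def by auto
  show "sup x y \<in> join_cl X W"
  proof (cases "U1 = {} \<or> U2 = {}")
    case True
    then have "sup x y = x \<or> sup x y = y"
      using U bot by (auto simp: bigjoin_def sup_absorb1 sup_absorb2)
    with \<open>x \<in> join_cl X W\<close> \<open>y \<in> join_cl X W\<close> show ?thesis by auto
  next
    case False
    then have "sup x y = bigjoin X (U1 \<union> U2)" using U by (simp add: bigjoin_def Sup_fin.union)
    with U show ?thesis unfolding join_cl_def by blast
  qed
qed

lemma G_set_Suc_eq: "G_set X (Suc k) = join_cl X (H_set X k)"
  by (simp add: H_set_def)

lemma finite_G_set: "finite X \<Longrightarrow> finite (G_set X k)"
  by (induction k) (auto intro: finite_meet_cl finite_join_cl)

lemma finite_H_set: "finite X \<Longrightarrow> finite (H_set X k)"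
  by (simp add: H_set_def finite_G_set finite_meet_cl)

lemma G_set_subset_H_set: "G_set X k \<subseteq> H_set X k"
  by (simp add: H_set_def subset_meet_cl)

lemma H_set_subset_G_set_Suc: "H_set X k \<subseteq> G_set X (Suc k)"
  unfolding G_set_Suc_eq by (rule subset_join_cl)

lemma subset_G_set: "X \<subseteq> G_set X k"
proof (induction k)
  case (Suc k)
  with G_set_subset_H_set H_set_subset_G_set_Suc show ?case by blast
qed simp

lemma subset_H_set: "X \<subseteq> H_set X k"
  using subset_G_set G_set_subset_H_set by blast

lemma Sup_fin_mem_H_set: "Sup_fin X \<in> H_set X k"
  by (simp add: H_set_def Sup_fin_mem_meet_cl)

lemma Inf_fin_mem_G_set_Suc: "Inf_fin X \<in> G_set X (Suc k)"
  by (simp add: G_set_Suc_eq Inf_fin_mem_join_cl)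

lemma Inf_fin_mem_H_set: "finite X \<Longrightarrow> X \<noteq> {} \<Longrightarrow> Inf_fin X \<in> H_set X k"
  using subset_G_set[of X k] unfolding H_set_def meet_cl_def bigmeet_def by auto

lemma inf_closed_H_set: "(\<And>a. a \<le> Sup_fin X) \<Longrightarrow> inf_closed (H_set X k)"
  by (simp add: H_set_def inf_closed_meet_cl)

lemma sup_closed_G_set_Suc: "(\<And>a. Inf_fin X \<le> a) \<Longrightarrow> sup_closed (G_set X (Suc k))"
  by (simp add: G_set_Suc_eq sup_closed_join_cl)

lemma level_partners:
  fixes R :: "'a::lattice \<Rightarrow> 'b::lattice \<Rightarrow> bool"
  assumes R_inf: "\<And>a b c d. R a b \<Longrightarrow> R c d \<Longrightarrow> R (inf a c) (inf b d)"
    and R_sup: "\<And>a b c d. R a b \<Longrightarrow> R c d \<Longrightarrow> R (sup a c) (sup b d)"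
    and R_top: "R (Sup_fin X) (Sup_fin Y)" and R_bot: "R (Inf_fin X) (Inf_fin Y)"
    and top: "\<And>b. b \<le> Sup_fin Y" and bot: "\<And>b. Inf_fin Y \<le> b"
    and base: "\<forall>x\<in>X. \<exists>y\<in>Y. R x y"
  shows "G_set X k \<subseteq> {a. \<exists>b\<in>G_set Y k. R a b} \<and> H_set X k \<subseteq> {a. \<exists>b\<in>H_set Y k. R a b}"
proof -
  have H_step: "H_set X k \<subseteq> {a. \<exists>b\<in>H_set Y k. R a b}"
    if "G_set X k \<subseteq> {a. \<exists>b\<in>G_set Y k. R a b}" for k
  proof -
    have "inf_closed {a. \<exists>b\<in>H_set Y k. R a b}"
      using inf_closed_H_set[OF top, of k] R_inf unfolding inf_closed_def by blast
    moreover have "G_set X k \<subseteq> {a. \<exists>b\<in>H_set Y k. R a b}"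
      using that G_set_subset_H_set by blast
    ultimately show ?thesis
      unfolding H_set_def[of X] using meet_cl_subset R_top Sup_fin_mem_H_set by blast
  qed
  have G_step: "G_set X (Suc k) \<subseteq> {a. \<exists>b\<in>G_set Y (Suc k). R a b}"
    if "H_set X k \<subseteq> {a. \<exists>b\<in>H_set Y k. R a b}" for k
  proof -
    have "sup_closed {a. \<exists>b\<in>G_set Y (Suc k). R a b}"
      using sup_closed_G_set_Suc[OF bot, of k] R_sup unfolding sup_closed_def by blast
    moreover have "H_set X k \<subseteq> {a. \<exists>b\<in>G_set Y (Suc k). R a b}"
      using that H_set_subset_G_set_Suc by blast
    ultimately show ?thesis
      unfolding G_set_Suc_eq[of X] using join_cl_subset R_bot Inf_fin_mem_G_set_Suc by blast
  qed
  show ?thesis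
  proof (induction k)
    case 0
    have "G_set X 0 \<subseteq> {a. \<exists>b\<in>G_set Y 0. R a b}"
      using base by auto
    with H_step show ?case by blast
  next
    case (Suc k)
    with H_step G_step show ?case by blast
  qed
qed

section \<open>Pairs in the sublattice generated by \<open>Z\<close>\<close>

locale pullback_generators =
  fixes X0 :: "'a::lattice set" and Y0 :: "'b::lattice set" and P :: "'d::lattice set"
    and g :: "'a \<Rightarrow> 'd" and h :: "'b \<Rightarrow> 'd"
    and E :: "'d set" and Z :: "('a \<times> 'b) set" and X :: "'a set" and Y :: "'b set"
  assumes X0_gen: "fin_gen_set X0" and Y0_gen: "fin_gen_set Y0" and P_gen: "fin_gen_set P"
    and dean: "dean_condition P"
    and g_epi: "lattice_epi g" and g_bounded: "bounded_hom g"
    and h_epi: "lattice_epi h" and h_bounded: "bounded_hom h"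
    and E_def: "E = g ` X0 \<union> h ` Y0 \<union> P"
    and Z_def: "Z = {(x, alpha_map h (g x)) | x. x \<in> X0}
                 \<union> {(beta_map g (h y), y) | y. y \<in> Y0}
                 \<union> {(alpha_map g d, beta_map h d) | d. d \<in> E}
                 \<union> {(beta_map g d, alpha_map h d) | d. d \<in> E}"
    and X_def: "X = fst ` Z" and Y_def: "Y = snd ` Z"
begin

lemma g_hom: "lattice_hom g" and h_hom: "lattice_hom h"
  using g_epi h_epi by (simp_all add: lattice_epi_def)

lemma g_mono: "a \<le> a' \<Longrightarrow> g a \<le> g a'" and h_mono: "b \<le> b' \<Longrightarrow> h b \<le> h b'"
  using lattice_hom_mono g_hom h_hom by blast+

lemma g_alpha_map: "g (alpha_map g d) = d" and g_beta_map: "g (beta_map g d) = d"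
  and h_alpha_map: "h (alpha_map h d) = d" and h_beta_map: "h (beta_map h d) = d"
  using alpha_map_greatest_preimage beta_map_least_preimage g_epi g_bounded h_epi h_bounded
  by blast+

lemma le_alpha_map_g: "g x \<le> d \<Longrightarrow> x \<le> alpha_map g d"
  using alpha_map_greatest_preimage[OF g_epi g_bounded] by blast

lemma beta_map_h_le: "d \<le> h y \<Longrightarrow> beta_map h d \<le> y"
  using beta_map_least_preimage[OF h_epi h_bounded] by blast

lemma finite_Z: "finite Z"
proof -
  have "finite E" using X0_gen Y0_gen P_gen by (simp add: E_def fin_gen_set_def)
  with X0_gen Y0_gen show ?thesis by (simp add: Z_def fin_gen_set_def Setcompr_eq_image)
qed

lemma finite_X: "finite X" and finite_Y: "finite Y"
  using finite_Z by (simp_all add: X_def Y_def)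

lemma X0_subset_X: "X0 \<subseteq> X"
  unfolding X_def Z_def by force

lemma Y0_subset_Y: "Y0 \<subseteq> Y"
  unfolding Y_def Z_def by force

lemma X_nonempty: "X \<noteq> {}" and Y_nonempty: "Y \<noteq> {}" and Z_nonempty: "Z \<noteq> {}"
  using X0_subset_X Y0_subset_Y fin_gen_set_nonempty[OF X0_gen] fin_gen_set_nonempty[OF Y0_gen]
  by (auto simp: Y_def)

lemma X_top: "a \<le> Sup_fin X" and X_bot: "Inf_fin X \<le> a"
  using fin_gen_set_bounds[OF X0_gen X0_subset_X finite_X] by blast+

lemma Y_top: "b \<le> Sup_fin Y" and Y_bot: "Inf_fin Y \<le> b"
  using fin_gen_set_bounds[OF Y0_gen Y0_subset_Y finite_Y] by blast+

lemma sublat_gen_pullback: "(a, b) \<in> sublat_gen Z \<Longrightarrow> g a = h b"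
proof -
  have "sublat_gen Z \<subseteq> {p. g (fst p) = h (snd p)}"
    using g_hom h_hom
    by (intro sublat_gen_subset)
       (auto simp: inf_closed_def sup_closed_def lattice_hom_def Z_def
         g_alpha_map g_beta_map h_alpha_map h_beta_map)
  then show "(a, b) \<in> sublat_gen Z \<Longrightarrow> g a = h b" by auto
qed

lemma top_pair_mem: "(Sup_fin X, Sup_fin Y) \<in> sublat_gen Z"
proof -
  have "Sup_fin Z \<in> sublat_gen Z"
    using Sup_fin_mem_sup_closed[OF sup_closed_sublat_gen finite_Z Z_nonempty] sublat_gen.gen_base
    by blast
  moreover have "Sup_fin Z = (Sup_fin X, Sup_fin Y)"
    using lattice_hom_Sup_fin[OF lattice_hom_fst finite_Z Z_nonempty]
      lattice_hom_Sup_fin[OF lattice_hom_snd finite_Z Z_nonempty]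
    by (simp add: X_def Y_def prod_eq_iff)
  ultimately show ?thesis by simp
qed

lemma bot_pair_mem: "(Inf_fin X, Inf_fin Y) \<in> sublat_gen Z"
proof -
  have "Inf_fin Z \<in> sublat_gen Z"
    using Inf_fin_mem_inf_closed[OF inf_closed_sublat_gen finite_Z Z_nonempty] sublat_gen.gen_base
    by blast
  moreover have "Inf_fin Z = (Inf_fin X, Inf_fin Y)"
    using lattice_hom_Inf_fin[OF lattice_hom_fst finite_Z Z_nonempty]
      lattice_hom_Inf_fin[OF lattice_hom_snd finite_Z Z_nonempty]
    by (simp add: X_def Y_def prod_eq_iff)
  ultimately show ?thesis by simp
qed

lemma g_image_X: "a \<in> X \<Longrightarrow> g a \<in> E" and h_image_Y: "b \<in> Y \<Longrightarrow> h b \<in> E"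
  unfolding X_def Y_def Z_def E_def by (auto simp: g_alpha_map g_beta_map h_alpha_map h_beta_map)

lemma generator_partners:
  "\<forall>a\<in>X. \<exists>b\<in>Y. (a, b) \<in> sublat_gen Z" "\<forall>b\<in>Y. \<exists>a\<in>X. (a, b) \<in> sublat_gen Z"
proof -
  have "z \<in> Z \<Longrightarrow> (fst z, snd z) \<in> sublat_gen Z" for z
    by (simp add: sublat_gen.gen_base)
  then show "\<forall>a\<in>X. \<exists>b\<in>Y. (a, b) \<in> sublat_gen Z" "\<forall>b\<in>Y. \<exists>a\<in>X. (a, b) \<in> sublat_gen Z"
    unfolding X_def Y_def by blast+
qed

lemma G_set_Y_partner: "b \<in> G_set Y k \<Longrightarrow> \<exists>a\<in>G_set X k. (a, b) \<in> sublat_gen Z"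
  using level_partners[of "\<lambda>b a. (a, b) \<in> sublat_gen Z" Y X, OF _ _ top_pair_mem bot_pair_mem
      X_top X_bot generator_partners(2)]
    sublat_gen_Pair_inf sublat_gen_Pair_sup
  by blast

lemma H_set_X_partner: "a \<in> H_set X k \<Longrightarrow> \<exists>b\<in>H_set Y k. (a, b) \<in> sublat_gen Z"
  using level_partners[of "\<lambda>a b. (a, b) \<in> sublat_gen Z" X Y, OF _ _ top_pair_mem bot_pair_mem
      Y_top Y_bot generator_partners(1)]
    sublat_gen_Pair_inf sublat_gen_Pair_sup
  by blast

definition covered :: "'a set \<Rightarrow> 'a \<Rightarrow> 'b \<Rightarrow> bool" where
  "covered T w b \<longleftrightarrow> (\<exists>x y. (x, y) \<in> sublat_gen Z \<and> x \<in> T \<and> w \<le> x \<and> y \<le> b)"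

lemma covered_mono: "covered T w b \<Longrightarrow> T \<subseteq> T' \<Longrightarrow> w' \<le> w \<Longrightarrow> b \<le> b' \<Longrightarrow> covered T' w' b'"
  unfolding covered_def by (meson order_trans subsetD)

lemma covered_through_E:
  assumes "X \<subseteq> T" "d \<in> E" "g w \<le> d" "d \<le> h b"
  shows "covered T w b"
proof -
  have Z: "(alpha_map g d, beta_map h d) \<in> Z" using assms(2) unfolding Z_def by blast
  then have "alpha_map g d \<in> T" using assms(1) unfolding X_def by (metis fst_conv image_eqI subsetD)
  moreover have "w \<le> alpha_map g d" using assms(3) by (rule le_alpha_map_g)
  moreover have "beta_map h d \<le> b" using assms(4) by (rule beta_map_h_le)
  ultimately show ?thesis
    unfolding covered_def using sublat_gen.gen_base[OF Z] by blast
qed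

lemma covered_Sup_fin_Y: "Sup_fin X \<in> T \<Longrightarrow> covered T w (Sup_fin Y)"
  unfolding covered_def using top_pair_mem X_top by blast

lemma covered_Inf_fin_X: "Inf_fin X \<in> T \<Longrightarrow> covered T (Inf_fin X) b"
  unfolding covered_def using bot_pair_mem Y_bot by blast

lemma sup_closed_covered:
  assumes "sup_closed T"
  shows "sup_closed {w. covered T w b}"
  unfolding sup_closed_def
proof (intro ballI, clarify)
  fix w w' assume "covered T w b" "covered T w' b"
  then obtain x y x' y' where p: "(x, y) \<in> sublat_gen Z" "x \<in> T" "w \<le> x" "y \<le> b"
    and p': "(x', y') \<in> sublat_gen Z" "x' \<in> T" "w' \<le> x'" "y' \<le> b"
    unfolding covered_def by blast
  have "(sup x x', sup y y') \<in> sublat_gen Z" using p(1) p'(1) by (rule sublat_gen_Pair_sup)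
  moreover have "sup x x' \<in> T" using assms p(2) p'(2) unfolding sup_closed_def by blast
  moreover have "sup w w' \<le> sup x x'" using p(3) p'(3) by (rule sup_mono)
  moreover have "sup y y' \<le> b" using p(4) p'(4) by simp
  ultimately show "covered T (sup w w') b" unfolding covered_def by blast
qed

lemma inf_closed_covered:
  assumes "inf_closed T"
  shows "inf_closed {b. covered T w b}"
  unfolding inf_closed_def
proof (intro ballI, clarify)
  fix b b' assume "covered T w b" "covered T w b'"
  then obtain x y x' y' where p: "(x, y) \<in> sublat_gen Z" "x \<in> T" "w \<le> x" "y \<le> b"
    and p': "(x', y') \<in> sublat_gen Z" "x' \<in> T" "w \<le> x'" "y' \<le> b'"
    unfolding covered_def by blast
  have "(inf x x', inf y y') \<in> sublat_gen Z" using p(1) p'(1) by (rule sublat_gen_Pair_inf)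
  moreover have "inf x x' \<in> T" using assms p(2) p'(2) unfolding inf_closed_def by blast
  moreover have "w \<le> inf x x'" using p(3) p'(3) by simp
  moreover have "inf y y' \<le> inf b b'" using p(4) p'(4) by (rule inf_mono)
  ultimately show "covered T w (inf b b')" unfolding covered_def by blast
qed

text \<open>Since \<open>Sup_fin X\<close> is the top of \<open>A\<close>, a covering pair for it can be found without
  restricting its first component, and then automatically lies in \<open>T\<close>.\<close>

lemma covered_Sup_fin_X:
  assumes "g (Sup_fin X) \<le> h b" "Sup_fin X \<in> T"
  shows "covered T (Sup_fin X) b"
proof -
  have "X \<subseteq> {w. covered UNIV w b}"
  proof
    fix x assume "x \<in> X"
    have "g x \<le> h b" using g_mono[OF X_top] assms(1) by (rule order_trans)
    with \<open>x \<in> X\<close> show "x \<in> {w. covered UNIV w b}"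
      using covered_through_E[of UNIV "g x" x b] g_image_X by simp
  qed
  then have "covered UNIV (Sup_fin X) b"
    using Sup_fin_mem_sup_closed[OF sup_closed_covered finite_X X_nonempty]
    by (auto simp: sup_closed_def)
  then show ?thesis
    unfolding covered_def using assms(2) X_top by (metis order_antisym)
qed

lemma covered_exact:
  assumes "covered T w b" "(a0, b) \<in> sublat_gen Z"
  shows "\<exists>a. (a, b) \<in> sublat_gen Z \<and> w \<le> a"
proof -
  obtain x y where xy: "(x, y) \<in> sublat_gen Z" "w \<le> x" "y \<le> b"
    using assms(1) unfolding covered_def by blast
  have "(sup x a0, sup y b) \<in> sublat_gen Z" using sublat_gen_Pair_sup[OF xy(1) assms(2)] .
  with xy show ?thesis by (metis le_supI1 sup_absorb2)
qed

definition covers_level :: "nat \<Rightarrow> 'b \<Rightarrow> bool" where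
  "covers_level j b \<longleftrightarrow> (\<forall>w\<in>H_set X j. g w \<le> h b \<longrightarrow> covered (H_set X j) w b)"

lemma covers_level_Y: "b \<in> Y \<Longrightarrow> covers_level j b"
  unfolding covers_level_def using covered_through_E[OF subset_H_set h_image_Y] by blast

lemma inf_closed_covers_level: "inf_closed {b. covers_level j b}"
  unfolding inf_closed_def
proof (intro ballI, clarify)
  fix b b' assume b: "covers_level j b" "covers_level j b'"
  show "covers_level j (inf b b')"
    unfolding covers_level_def
  proof (intro ballI impI)
    fix w assume w: "w \<in> H_set X j" "g w \<le> h (inf b b')"
    moreover have "h (inf b b') = inf (h b) (h b')" using h_hom by (simp add: lattice_hom_def)
    ultimately have "covered (H_set X j) w b" "covered (H_set X j) w b'"
      using b unfolding covers_level_def by simp_all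
    then show "covered (H_set X j) w (inf b b')"
      using inf_closed_covered[OF inf_closed_H_set[OF X_top]] unfolding inf_closed_def by blast
  qed
qed

lemma covers_level_H_set:
  assumes "G_set Y m \<subseteq> {b. covers_level j b}"
  shows "H_set Y m \<subseteq> {b. covers_level j b}"
  unfolding H_set_def[of Y]
proof (rule meet_cl_subset[OF inf_closed_covers_level _ assms])
  show "Sup_fin Y \<in> {b. covers_level j b}"
    by (simp add: covers_level_def covered_Sup_fin_Y Sup_fin_mem_H_set)
qed

lemma covered_G_set:
  assumes prev: "\<And>j'. j = Suc j' \<Longrightarrow> covers_level j' b" and u: "u \<in> G_set X j" "g u \<le> h b"
  shows "covered (G_set X j) u b"
proof (cases j)
  case 0
  with u show ?thesis using covered_through_E[of _ "g u"] g_image_X by simp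
next
  case (Suc j')
  obtain U where U: "finite U" "U \<subseteq> H_set X j'" "u = bigjoin X U"
    using u(1) unfolding Suc G_set_Suc_eq join_cl_def by auto
  have "bigjoin X U \<in> {t. covered (G_set X j) t b}"
  proof (rule bigjoin_mem_sup_closed[OF _ _ U(1)])
    show "sup_closed {t. covered (G_set X j) t b}"
      unfolding Suc by (rule sup_closed_covered[OF sup_closed_G_set_Suc[OF X_bot]])
    show "Inf_fin X \<in> {t. covered (G_set X j) t b}"
      unfolding Suc mem_Collect_eq by (rule covered_Inf_fin_X[OF Inf_fin_mem_G_set_Suc])
    show "U \<subseteq> {t. covered (G_set X j) t b}"
    proof
      fix t assume t: "t \<in> U"
      have "g t \<le> g u" using g_mono bigjoin_upper[OF U(1) t] U(3) by simp
      then have "g t \<le> h b" using u(2) by (rule order_trans)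
      with prev[OF Suc] t U(2) have "covered (H_set X j') t b"
        unfolding covers_level_def by blast
      then show "t \<in> {t. covered (G_set X j) t b}"
        unfolding Suc using covered_mono[OF _ H_set_subset_G_set_Suc] by blast
    qed
  qed
  with U(3) show ?thesis by simp
qed

lemma covers_level_G_set_Suc:
  assumes H: "H_set Y m \<subseteq> {v. covers_level j v}"
    and prev: "\<And>j'. j = Suc j' \<Longrightarrow> covers_level j' b"
    and b: "b \<in> G_set Y (Suc m)"
  shows "covers_level j b"
  unfolding covers_level_def
proof (intro ballI impI)
  fix w assume w: "w \<in> H_set X j" "g w \<le> h b"
  obtain U where U: "finite U" "U \<subseteq> G_set X j" "w = bigmeet X U"
    using w(1) unfolding H_set_def meet_cl_def by auto
  obtain V where V: "finite V" "V \<subseteq> H_set Y m" "b = bigjoin Y V"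
    using b unfolding G_set_Suc_eq join_cl_def by auto
  show "covered (H_set X j) w b"
  proof (cases "U = {}")
    case True
    with U w show ?thesis using covered_Sup_fin_X Sup_fin_mem_H_set by (simp add: bigmeet_def)
  next
    case U_ne: False
    show ?thesis
    proof (cases "V = {}")
      case True
      with V have "b = Inf_fin Y" by (simp add: bigjoin_def)
      with H have "covers_level j b" using Inf_fin_mem_H_set[OF finite_Y Y_nonempty] by blast
      with w show ?thesis unfolding covers_level_def by blast
    next
      case V_ne: False
      have w_eq: "w = Inf_fin U" and b_eq: "b = Sup_fin V"
        using U V U_ne V_ne by (simp_all add: bigmeet_def bigjoin_def)
      consider (below_U) u where "u \<in> U" "g u \<le> h b"
        | (below_V) v where "v \<in> V" "g w \<le> h v"
        | (through_P) p where "p \<in> P" "g w \<le> p" "p \<le> h b"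
        using dean_conditionE[OF dean g_hom h_hom U(1) U_ne V(1) V_ne] w(2) w_eq b_eq by metis
      then show ?thesis
      proof cases
        case below_U
        then have "covered (G_set X j) u b" using covered_G_set[OF prev] U(2) by blast
        moreover have "w \<le> u" using bigmeet_lower[OF U(1) below_U(1)] U(3) by simp
        ultimately show ?thesis using covered_mono[OF _ G_set_subset_H_set] by blast
      next
        case below_V
        with H V(2) w(1) have "covered (H_set X j) w v" unfolding covers_level_def by blast
        moreover have "v \<le> b" using bigjoin_upper[OF V(1) below_V(1)] V(3) by simp
        ultimately show ?thesis using covered_mono by blast
      next
        case through_P
        have "p \<in> E" using through_P(1) by (simp add: E_def)
        from this through_P(2,3) show ?thesis by (rule covered_through_E[OF subset_H_set])
      qed
    qed
  qed
qed

lemma covers_level_G_set: "b \<in> G_set Y m \<Longrightarrow> covers_level j b"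
proof (induction m arbitrary: j b)
  case 0
  then show ?case by (simp add: covers_level_Y)
next
  case (Suc m)
  have H: "H_set Y m \<subseteq> {v. covers_level j v}" for j
    using covers_level_H_set Suc.IH by blast
  \<comment> \<open>level \<open>Suc j\<close> of \<open>b\<close> needs level \<open>j\<close> of the same \<open>b\<close>, hence the inner induction\<close>
  show ?case
    by (induction j) (use covers_level_G_set_Suc[OF H _ Suc.prems] in auto)
qed

lemma alpha_k_pair_mem:
  assumes b: "b \<in> G_set Y k"
  shows "(alpha_k X g k (h b), b) \<in> sublat_gen Z"
proof -
  define W where "W = {w \<in> G_set X k. g w \<le> h b}"
  define \<alpha> where "\<alpha> = bigjoin X W"
  have fin_W: "finite W" using finite_G_set[OF finite_X] unfolding W_def by simp
  have le_\<alpha>: "x \<le> \<alpha>" if "x \<in> G_set X k" "g x \<le> h b" for x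
    using bigjoin_upper[OF fin_W] that unfolding W_def \<alpha>_def by blast
  have "bigjoin X W \<in> {t. covered {..\<alpha>} t b}"
  proof (rule bigjoin_mem_sup_closed[OF _ _ fin_W])
    have "sup_closed {..\<alpha>}" by (simp add: sup_closed_def)
    then show "sup_closed {t. covered {..\<alpha>} t b}" by (rule sup_closed_covered)
    show "Inf_fin X \<in> {t. covered {..\<alpha>} t b}"
      using covered_Inf_fin_X X_bot by simp
    show "W \<subseteq> {t. covered {..\<alpha>} t b}"
    proof
      fix t assume "t \<in> W"
      then have "covered (G_set X k) t b"
        using covered_G_set covers_level_G_set[OF b] unfolding W_def by blast
      then obtain x y where xy: "(x, y) \<in> sublat_gen Z" "x \<in> G_set X k" "t \<le> x" "y \<le> b"
        unfolding covered_def by blast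
      have "g x \<le> h b" using sublat_gen_pullback[OF xy(1)] h_mono[OF xy(4)] by simp
      with xy show "t \<in> {t. covered {..\<alpha>} t b}"
        using le_\<alpha> unfolding covered_def by blast
    qed
  qed
  then obtain x y where xy: "(x, y) \<in> sublat_gen Z" "x = \<alpha>" "y \<le> b"
    unfolding covered_def \<alpha>_def[symmetric] by (auto intro: order_antisym)
  obtain a0 where a0: "a0 \<in> G_set X k" "(a0, b) \<in> sublat_gen Z"
    using G_set_Y_partner[OF b] by blast
  have "a0 \<le> \<alpha>" using le_\<alpha>[OF a0(1)] sublat_gen_pullback[OF a0(2)] by simp
  moreover have "(sup x a0, sup y b) \<in> sublat_gen Z" using xy(1) a0(2) by (rule sublat_gen_Pair_sup)
  ultimately have "(\<alpha>, b) \<in> sublat_gen Z" using xy(2,3) by (simp add: sup_absorb1 sup_absorb2)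
  then show ?thesis by (simp add: alpha_k_def \<alpha>_def W_def)
qed

definition partners_above :: "'a \<Rightarrow> 'b set" where
  "partners_above a = {b. \<exists>x. (x, b) \<in> sublat_gen Z \<and> a \<le> x}"

lemma inf_closed_partners_above: "inf_closed (partners_above a)"
  unfolding inf_closed_def partners_above_def
proof (intro ballI, clarify)
  fix b b' x x' assume "(x, b) \<in> sublat_gen Z" "a \<le> x" "(x', b') \<in> sublat_gen Z" "a \<le> x'"
  then have "(inf x x', inf b b') \<in> sublat_gen Z" "a \<le> inf x x'"
    by (simp_all add: sublat_gen_Pair_inf)
  then show "\<exists>x. (x, inf b b') \<in> sublat_gen Z \<and> a \<le> x" by blast
qed

lemma Sup_fin_Y_mem_partners_above: "Sup_fin Y \<in> partners_above a"
  unfolding partners_above_def using top_pair_mem X_top by blast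

lemma H_set_mem_partners_above:
  assumes a: "a \<in> H_set X k" and v: "v \<in> H_set Y k" and le: "g a \<le> h v"
  shows "v \<in> partners_above a"
proof -
  obtain V where V: "finite V" "V \<subseteq> G_set Y k" "v = bigmeet Y V"
    using v unfolding H_set_def meet_cl_def by auto
  have "V \<subseteq> partners_above a"
  proof
    fix t assume t: "t \<in> V"
    have "h v \<le> h t" using h_mono bigmeet_lower[OF V(1) t] V(3) by simp
    with le have "g a \<le> h t" by (rule order_trans)
    moreover have "covers_level k t" using covers_level_G_set t V(2) by blast
    ultimately have "covered (H_set X k) a t" using a unfolding covers_level_def by blast
    moreover obtain a0 where "(a0, t) \<in> sublat_gen Z" using G_set_Y_partner t V(2) by blast
    ultimately show "t \<in> partners_above a"
      unfolding partners_above_def using covered_exact by blast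
  qed
  with V show ?thesis
    using bigmeet_mem_inf_closed[OF inf_closed_partners_above Sup_fin_Y_mem_partners_above] by simp
qed

lemma beta_k_pair_mem:
  assumes a: "a \<in> H_set X k"
  shows "(a, beta_k Y h k (g a)) \<in> sublat_gen Z"
proof -
  define V where "V = {v \<in> H_set Y k. g a \<le> h v}"
  define \<beta> where "\<beta> = bigmeet Y V"
  have fin_V: "finite V" using finite_H_set[OF finite_Y] unfolding V_def by simp
  have "V \<subseteq> partners_above a" using H_set_mem_partners_above[OF a] unfolding V_def by blast
  then have "\<beta> \<in> partners_above a" unfolding \<beta>_def
    using bigmeet_mem_inf_closed[OF inf_closed_partners_above Sup_fin_Y_mem_partners_above fin_V]
    by blast
  then obtain x where x: "(x, \<beta>) \<in> sublat_gen Z" "a \<le> x" unfolding partners_above_def by blast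
  obtain b0 where b0: "b0 \<in> H_set Y k" "(a, b0) \<in> sublat_gen Z"
    using H_set_X_partner[OF a] by blast
  have "\<beta> \<le> b0"
    using bigmeet_lower[OF fin_V] b0(1) sublat_gen_pullback[OF b0(2)] unfolding V_def \<beta>_def by simp
  moreover have "(inf a x, inf b0 \<beta>) \<in> sublat_gen Z" using b0(2) x(1) by (rule sublat_gen_Pair_inf)
  ultimately have "(a, \<beta>) \<in> sublat_gen Z" using x(2) by (simp add: inf_absorb1 inf_absorb2)
  then show ?thesis by (simp add: beta_k_def \<beta>_def V_def)
qed

end

theorem claim2:
  fixes X0 :: "'a::lattice set" and Y0 :: "'b::lattice set" and P :: "'d::lattice set"
    and g :: "'a \<Rightarrow> 'd" and h :: "'b \<Rightarrow> 'd"
    and E :: "'d set" and Z :: "('a \<times> 'b) set" and X :: "'a set" and Y :: "'b set"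
  assumes "fin_gen_set X0" and "fin_gen_set Y0" and "fin_gen_set P"
    and "dean_condition P"
    and "lattice_epi g" and "bounded_hom g"
    and "lattice_epi h" and "bounded_hom h"
    and E_def: "E = g ` X0 \<union> h ` Y0 \<union> P"
    and Z_def: "Z = {(x, alpha_map h (g x)) | x. x \<in> X0}
                 \<union> {(beta_map g (h y), y) | y. y \<in> Y0}
                 \<union> {(alpha_map g d, beta_map h d) | d. d \<in> E}
                 \<union> {(beta_map g d, alpha_map h d) | d. d \<in> E}"
    and X_def: "X = fst ` Z" and Y_def: "Y = snd ` Z"
  shows "\<forall>k::nat. (\<forall>b \<in> G_set Y k. (alpha_k X g k (h b), b) \<in> sublat_gen Z)
                 \<and> (\<forall>a \<in> H_set X k. (a, beta_k Y h k (g a)) \<in> sublat_gen Z)"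
proof -
  interpret pullback_generators X0 Y0 P g h E Z X Y
    using assms by (rule pullback_generators.intro)
  show ?thesis using alpha_k_pair_mem beta_k_pair_mem by blast
qed

end
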